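(* Let $\kappa\ge2$, $n\ge1$ be integers and $0<\epsilon<1$. Let $\check q$ be given by $\check q_i=0$ for $0\le i<2^{\kappa-1}$ and $\check q_i=2^{1-\kappa}$ for $2^{\kappa-1}\le i\le2^\kappa-1$. Let $\mathcal{C}_\rho$ be the set of $q\in\mathbb{R}^{2^\kappa}$ with $q_0=0$, $q_i\ge0$ for all $i$, $\sum_iq_i=1$, and $\sum_{i=1}^{2^\kappa-1}\big(q_i-\tfrac{1}{2^\kappa-1}\big)^2=\frac{2^{\kappa-1}-1}{(2^\kappa-2^{\kappa-1})(2^\kappa-1)}.$ Then $\check q\in\mathcal{C}_\rho$ and $\lambda(n,\epsilon,\check q)\le\lambda(n,\epsilon,q)$ for all $q\in\mathcal{C}_\rho$.
   Context: $W=\mathbb{F}_2^\kappa$; $\nu(i)\in W$ is the binary expansion of $i\in\{0,\dots,2^\kappa-1\}$; vectors $q$ are indexed $q_0,\dots,q_{2^\kappa-1}$. For a subspace $S\subseteq W$, $\zeta(S,q)=\sum_{i:\nu(i)\in S}q_i$; $\Xi(W,\kappa-1)$ is the set of $(\kappa-1)$-dimensional subspaces of $W$. For real $q$ define $\lambda(n,\epsilon,q)=(2-\epsilon)^n2^{-\kappa}\Big(1+\sum_{S\in\Xi(W,\kappa-1)}\big(\tfrac{\epsilon}{2-\epsilon}\big)^{n(1-\zeta(S,q))}\Big)-1$ (the $\chi^2$ divergence between $p_{MZ}$ and $p_Mp_Z$ for the coset code over a binary erasure channel with erasure probability $\epsilon$, when $q$ is a generator matrix's column-distribution vector). The vector $\check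 q$ (the first subspace exclusion code) puts equal weight on all vectors outside the $(\kappa-1)$-dimensional subspace $\{\nu(i):i<2^{\kappa-1}\}$. *)

theory Defs
  imports "HOL-Analysis.Analysis"
begin

text \<open>Vectors of W = F_2^kappa are represented as subsets of {0..<kappa}
  (the support of the 0/1 vector); vector addition is symmetric difference.\<close>

definition Wsp :: "nat \<Rightarrow> nat set set" where
  "Wsp \<kappa> = Pow {0..<\<kappa>}"

definition vadd :: "nat set \<Rightarrow> nat set \<Rightarrow> nat set" where
  "vadd x y = (x - y) \<union> (y - x)"

definition nu :: "nat \<Rightarrow> nat set" where
  "nu i = {j. bit i j}"

definition vsum :: "nat set set \<Rightarrow> nat set" where
  "vsum T = {j. odd (card {t\<in>T. j \<in> t})}"

definition F2_span :: "nat set set \<Rightarrow> nat set set" where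
  "F2_span B = {vsum T | T. T \<subseteq> B}"

definition F2_indep :: "nat set set \<Rightarrow> bool" where
  "F2_indep B \<longleftrightarrow> finite B \<and> (\<forall>T\<subseteq>B. T \<noteq> {} \<longrightarrow> vsum T \<noteq> {})"

definition is_subspace :: "nat \<Rightarrow> nat set set \<Rightarrow> bool" where
  "is_subspace \<kappa> S \<longleftrightarrow> S \<subseteq> Wsp \<kappa> \<and> {} \<in> S \<and> (\<forall>x\<in>S. \<forall>y\<in>S. vadd x y \<in> S)"

definition Xi :: "nat \<Rightarrow> nat \<Rightarrow> nat set set set" where
  "Xi \<kappa> d = {S. is_subspace \<kappa> S \<and>
       (\<exists>B. B \<subseteq> S \<and> F2_indep B \<and> card B = d \<and> F2_span B = S)}"

definition zeta :: "nat \<Rightarrow> nat set set \<Rightarrow> (nat \<Rightarrow> real) \<Rightarrow> real" where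
  "zeta \<kappa> S q = (\<Sum>i\<in>{i. i < 2^\<kappa> \<and> nu i \<in> S}. q i)"

definition lambda_chi :: "nat \<Rightarrow> nat \<Rightarrow> real \<Rightarrow> (nat \<Rightarrow> real) \<Rightarrow> real" where
  "lambda_chi \<kappa> n \<epsilon> q =
     (2 - \<epsilon>) ^ n * 2 powi (- int \<kappa>) *
       (1 + (\<Sum>S\<in>Xi \<kappa> (\<kappa> - 1). (\<epsilon> / (2 - \<epsilon>)) powr (real n * (1 - zeta \<kappa> S q)))) - 1"

definition qcheck :: "nat \<Rightarrow> nat \<Rightarrow> real" where
  "qcheck \<kappa> i = (if i < 2^(\<kappa>-1) \<or> i \<ge> 2^\<kappa> then 0 else 2 powi (1 - int \<kappa>))"

text \<open>Vectors q in R^(2^kappa) are functions nat => real, only indices < 2^kappa matter.\<close>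
definition C_rho :: "nat \<Rightarrow> (nat \<Rightarrow> real) set" where
  "C_rho \<kappa> = {q. q 0 = 0 \<and> (\<forall>i<2^\<kappa>. q i \<ge> 0) \<and> (\<Sum>i<2^\<kappa>. q i) = 1 \<and>
      (\<Sum>i\<in>{1..<2^\<kappa>}. (q i - 1 / (2^\<kappa> - 1))^2) =
        (2^(\<kappa>-1) - 1) / ((2^\<kappa> - 2^(\<kappa>-1)) * (2^\<kappa> - 1))}"

end

theory Submission
  imports Defs
begin

text \<open>The (\<kappa>-1)-dimensional subspaces of W are the kernels H_a of the nonzero linear forms
  x \<mapsto> |x \<inter> a| mod 2, and \<zeta>(H_a, q) = (1 + walsh q a)/2 where walsh q is the Walsh transform
  of q. Hence \<lambda> is an increasing function of \<Sum>_a exp (s x_a), with x_a = 1 + walsh q a \<ge> 0 and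
  s = -(n/2) ln (\<epsilon>/(2-\<epsilon>)) > 0. On the constraint set, Parseval's identity makes both \<Sum>_a x_a and
  \<Sum>_a x_a^2 equal to 2^\<kappa> - 2. Convexity of (e^(sx) - 1)/x gives a quadratic lower bound for
  e^(sx) on x \<ge> 0 that is exact at x = 0 and x = 1; summed over a, it bounds \<Sum>_a exp (s x_a) below
  by a quantity depending only on the two moments, and the subspace exclusion code, whose x_a all lie
  in {0, 1}, attains it.\<close>

lemma nu_subset: assumes "i < 2^k" shows "nu i \<subseteq> {0..<k}"
proof
  fix j assume "j \<in> nu i"
  with assms have "bit (take_bit k i) j" by (simp add: nu_def take_bit_nat_eq_self)
  then show "j \<in> {0..<k}" by (simp add: bit_take_bit_iff)
qed

lemma inj_nu: "inj nu"
  by (rule injI) (simp add: nu_def bit_eq_iff set_eq_iff)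

lemma nu_eq_empty_iff: "nu i = {} \<longleftrightarrow> i = 0"
  by (auto simp: nu_def bit_eq_iff[of i 0])

lemma top_mem_nu_iff:
  assumes "i < 2^k" "1 \<le> k" shows "k - 1 \<in> nu i \<longleftrightarrow> 2^(k-1) \<le> i"
proof -
  have "i div 2^(k-1) < 2"
    using assms by (simp add: div_less_iff_less_mult power_Suc[symmetric])
  then have "odd (i div 2^(k-1)) \<longleftrightarrow> 0 < i div 2^(k-1)"
    by (auto dest: less_2_cases)
  then show ?thesis
    by (simp add: nu_def bit_iff_odd div_greater_zero_iff)
qed

lemma bij_betw_nu: "bij_betw nu {..<2^k} (Pow {0..<k})"
proof -
  have "inj_on nu {..<2^k}" using inj_nu by (rule inj_on_subset) simp
  moreover have "nu ` {..<2^k} \<subseteq> Pow {0..<k}" using nu_subset by auto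
  ultimately show ?thesis
    by (simp add: bij_betw_def card_subset_eq card_image card_Pow)
qed

section \<open>Linear algebra over \<open>F\<^sub>2\<close>\<close>

lemma vadd_vadd_cancel: "vadd x (vadd x y) = y"
  by (auto simp: vadd_def)

lemma vadd_commute: "vadd x y = vadd y x"
  by (auto simp: vadd_def)

lemma sum_Pow_minus_one_power_card_Int:
  assumes "finite K"
  shows "(\<Sum>a\<in>Pow K. (-1::real) ^ card (x \<inter> a)) = (if x \<inter> K = {} then 2 ^ card K else 0)"
  using assms
proof (induction K rule: finite_induct)
  case (insert k K)
  have "(\<Sum>a\<in>Pow (insert k K). (-1::real) ^ card (x \<inter> a))
      = (\<Sum>a\<in>Pow K. (-1::real) ^ card (x \<inter> a)) + (\<Sum>a\<in>Pow K. (-1::real) ^ card (x \<inter> insert k a))"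
  proof -
    have "Pow K \<inter> insert k ` Pow K = {}" "inj_on (insert k) (Pow K)"
      using insert.hyps by (auto simp: inj_on_def)
    then show ?thesis
      using insert.hyps by (simp add: Pow_insert sum.union_disjoint sum.reindex)
  qed
  also have "(\<Sum>a\<in>Pow K. (-1::real) ^ card (x \<inter> insert k a))
      = (if k \<in> x then -1 else 1) * (\<Sum>a\<in>Pow K. (-1::real) ^ card (x \<inter> a))"
  proof -
    have "(-1::real) ^ card (x \<inter> insert k a) = (if k \<in> x then -1 else 1) * (-1) ^ card (x \<inter> a)"
      if "a \<in> Pow K" for a
      using that insert.hyps finite_subset[of a K] by (auto simp: Int_insert_right card_insert_if)
    then show ?thesis by (simp add: sum_distrib_left)
  qed
  finally show ?case
    using insert.IH insert.hyps by auto
qed simp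

lemma even_card_sym_diff_iff:
  assumes "finite A" "finite B"
  shows "even (card (sym_diff A B)) \<longleftrightarrow> (even (card A) \<longleftrightarrow> even (card B))"
proof -
  have "(A - B) \<inter> (B - A) = {}" by blast
  then have "card (sym_diff A B) + 2 * card (A \<inter> B) = card A + card B"
    using assms card_Un_disjoint[of "A - B" "B - A"] card_Diff_subset_Int[of A B]
      card_Diff_subset_Int[of B A] card_mono[of A "A \<inter> B"] card_mono[of B "A \<inter> B"]
    by (auto simp: Int_commute)
  then show ?thesis by presburger
qed

lemma even_card_vadd_Int_iff:
  assumes "finite a"
  shows "even (card (vadd x y \<inter> a)) \<longleftrightarrow> (even (card (x \<inter> a)) \<longleftrightarrow> even (card (y \<inter> a)))"
proof -
  have "vadd x y \<inter> a = (x \<inter> a - y \<inter> a) \<union> (y \<inter> a - x \<inter> a)" by (auto simp: vadd_def)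
  then show ?thesis using assms by (simp add: even_card_sym_diff_iff)
qed

lemma minus_one_power_card_vadd_Int:
  assumes "finite a"
  shows "(-1::real) ^ card (vadd x y \<inter> a) = (-1) ^ card (x \<inter> a) * (-1) ^ card (y \<inter> a)"
  using even_card_vadd_Int_iff[OF assms, of x y] by (auto simp: minus_one_power_iff)

lemma vsum_insert:
  assumes "finite T" "t \<notin> T" shows "vsum (insert t T) = vadd t (vsum T)"
proof -
  have "{t'\<in>insert t T. j \<in> t'} = (if j \<in> t then insert t {t'\<in>T. j \<in> t'} else {t'\<in>T. j \<in> t'})" for j
    by auto
  then show ?thesis
    using assms by (auto simp: vsum_def vadd_def)
qed

lemma vsum_sym_diff:
  assumes "finite T" "finite U"
  shows "vsum (sym_diff T U) = vadd (vsum T) (vsum U)"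
proof -
  have "{t\<in>sym_diff T U. j \<in> t} = ({t\<in>T. j \<in> t} - {t\<in>U. j \<in> t}) \<union> ({t\<in>U. j \<in> t} - {t\<in>T. j \<in> t})" for j
    by auto
  then show ?thesis
    using assms by (auto simp: vsum_def vadd_def even_card_sym_diff_iff)
qed

lemma vsum_mem_subspace:
  assumes "is_subspace k S" "finite T" "T \<subseteq> S" shows "vsum T \<in> S"
  using assms(2,3)
proof (induction T rule: finite_induct)
  case empty
  then show ?case using assms(1) by (simp add: is_subspace_def vsum_def)
next
  case (insert t T)
  then have "t \<in> S" "vsum T \<in> S" by auto
  then show ?case using assms(1) insert.hyps by (simp add: vsum_insert is_subspace_def)
qed

lemma F2_span_subset_subspace:
  assumes "is_subspace k S" "finite B" "B \<subseteq> S" shows "F2_span B \<subseteq> S"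
proof
  fix x assume "x \<in> F2_span B"
  then obtain T where T: "T \<subseteq> B" "x = vsum T" by (auto simp: F2_span_def)
  have "finite T" using T(1) assms(2) by (rule finite_subset)
  then show "x \<in> S"
    using T assms(3) vsum_mem_subspace[OF assms(1)] by auto
qed

lemma card_F2_span:
  assumes "F2_indep B" shows "card (F2_span B) = 2 ^ card B"
proof -
  have fin: "finite B" and ind: "\<forall>T\<subseteq>B. T \<noteq> {} \<longrightarrow> vsum T \<noteq> {}"
    using assms by (simp_all add: F2_indep_def)
  have "inj_on vsum (Pow B)"
  proof (rule inj_onI)
    fix T U assume TU: "T \<in> Pow B" "U \<in> Pow B" "vsum T = vsum U"
    then have "vsum (sym_diff T U) = {}"
      using fin finite_subset[of T B] finite_subset[of U B] by (simp add: vsum_sym_diff vadd_def)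
    moreover have "sym_diff T U \<subseteq> B" using TU by auto
    ultimately have "sym_diff T U = {}"
      using ind by blast
    then show "T = U" by blast
  qed
  moreover have "F2_span B = vsum ` Pow B" by (auto simp: F2_span_def)
  ultimately show ?thesis using fin by (simp add: card_image card_Pow)
qed

lemma card_Xi:
  assumes "S \<in> Xi k d" shows "card S = 2 ^ d"
proof -
  obtain B where "F2_indep B" "card B = d" "F2_span B = S"
    using assms by (auto simp: Xi_def)
  then show ?thesis using card_F2_span by metis
qed

lemma F2_indep_if_private_coordinates:
  assumes "finite B" "\<And>t. t \<in> B \<Longrightarrow> \<exists>j\<in>t. \<forall>t'\<in>B. j \<in> t' \<longrightarrow> t' = t"
  shows "F2_indep B"
  unfolding F2_indep_def
proof (intro conjI allI impI assms(1))
  fix T assume T: "T \<subseteq> B" "T \<noteq> {}"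
  then obtain t where t: "t \<in> T" by blast
  with T obtain j where "j \<in> t" "\<forall>t'\<in>B. j \<in> t' \<longrightarrow> t' = t"
    using assms(2) by blast
  with t T(1) have "{t'\<in>T. j \<in> t'} = {t}" by blast
  then have "j \<in> vsum T" by (simp add: vsum_def)
  then show "vsum T \<noteq> {}" by blast
qed

section \<open>Hyperplanes\<close>

definition hyperplane :: "nat \<Rightarrow> nat set \<Rightarrow> nat set set" where
  "hyperplane k a = {x \<in> Pow {0..<k}. even (card (x \<inter> a))}"

lemma hyperplane_subspace:
  assumes "finite a" shows "is_subspace k (hyperplane k a)"
  using even_card_vadd_Int_iff[OF assms]
  by (auto simp: is_subspace_def hyperplane_def Wsp_def vadd_def)

lemma card_hyperplane:
  assumes "a \<subseteq> {0..<k}" "a \<noteq> {}" shows "card (hyperplane k a) = 2 ^ (k - 1)"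
proof -
  have "real (card (hyperplane k a)) = (\<Sum>x\<in>Pow {0..<k}. if even (card (x \<inter> a)) then 1 else 0)"
    unfolding hyperplane_def by (simp add: sum.inter_filter[symmetric])
  also have "\<dots> = (\<Sum>x\<in>Pow {0..<k}. (1 + (-1) ^ card (a \<inter> x)) / 2)"
    by (intro sum.cong) (auto simp: Int_commute)
  also have "\<dots> = (2 ^ k + (\<Sum>x\<in>Pow {0..<k}. (-1) ^ card (a \<inter> x))) / 2"
    by (simp add: sum.distrib card_Pow flip: sum_divide_distrib)
  also have "\<dots> = 2 ^ (k - 1)"
    using assms by (cases k) (auto simp: sum_Pow_minus_one_power_card_Int Int_absorb2)
  finally show ?thesis by (metis of_nat_eq_of_nat_power_cancel_iff of_nat_numeral)
qed

lemma hyperplane_in_Xi: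
  assumes a: "a \<subseteq> {0..<k}" "a \<noteq> {}" shows "hyperplane k a \<in> Xi k (k - 1)"
proof -
  let ?K = "{0..<k}" and ?H = "hyperplane k a"
  obtain m where m: "m \<in> a" using a by blast
  \<comment> \<open>basis: \<open>{j}\<close> for \<open>j \<notin> a\<close> and \<open>{m, j}\<close> for \<open>j \<in> a - {m}\<close>; coordinate j occurs in no other basis vector\<close>
  define f where "f j = (if j \<in> a then {m, j} else {j})" for j
  define B where "B = f ` (?K - {m})"
  have private_coord: "j = j'" if "j \<in> f j'" "j \<noteq> m" for j j'
    using that by (auto simp: f_def split: if_splits)
  have "inj_on f (?K - {m})"
  proof (rule inj_onI)
    fix j j' assume "j \<in> ?K - {m}" "f j = f j'"
    moreover have "j \<in> f j" by (simp add: f_def)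
    ultimately show "j = j'" using private_coord by auto
  qed
  moreover have "m \<in> ?K" using m a by blast
  ultimately have card_B: "card B = k - 1"
    by (simp add: B_def card_image)
  have B_H: "B \<subseteq> ?H"
    using m a by (auto simp: B_def f_def hyperplane_def)
  have finB: "finite B" by (simp add: B_def)
  have indep: "F2_indep B"
  proof (rule F2_indep_if_private_coordinates[OF finB])
    fix t assume "t \<in> B"
    then obtain j where j: "j \<in> ?K - {m}" "t = f j" unfolding B_def by blast
    have "t' = t" if "t' \<in> B" "j \<in> t'" for t'
    proof -
      obtain j' where "t' = f j'" using \<open>t' \<in> B\<close> unfolding B_def by blast
      then show ?thesis using private_coord[of j j'] that j by auto
    qed
    moreover have "j \<in> t" using j by (simp add: f_def)
    ultimately show "\<exists>j\<in>t. \<forall>t'\<in>B. j \<in> t' \<longrightarrow> t' = t" by blast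
  qed
  have sub: "is_subspace k ?H"
    using a finite_subset by (intro hyperplane_subspace) blast
  have "F2_span B \<subseteq> ?H" by (rule F2_span_subset_subspace[OF sub finB B_H])
  moreover have "card (F2_span B) = card ?H"
    using card_F2_span[OF indep] card_B card_hyperplane[OF a] by simp
  ultimately have "F2_span B = ?H"
    by (intro card_subset_eq) (auto simp: hyperplane_def)
  then show ?thesis
    using sub B_H indep card_B by (auto simp: Xi_def)
qed

lemma vadd_mem_half_subspace_iff:
  assumes S: "is_subspace k S" "card S = 2 ^ (k - 1)" and k: "1 \<le> k"
    and xy: "x \<in> Wsp k" "y \<in> Wsp k"
  shows "vadd x y \<in> S \<longleftrightarrow> (x \<in> S \<longleftrightarrow> y \<in> S)"
proof -
  have closed: "vadd u v \<in> S" if "u \<in> S" "v \<in> S" for u v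
    using S(1) that by (simp add: is_subspace_def)
  have outside: "vadd x y \<in> S" if x_out: "x \<notin> S" and y_out: "y \<notin> S"
  proof -
    \<comment> \<open>S has index 2, so translation by x maps S onto its complement\<close>
    have finW: "finite (Wsp k)" by (simp add: Wsp_def)
    have SW: "S \<subseteq> Wsp k" using S(1) by (simp add: is_subspace_def)
    have "vadd x ` S \<subseteq> Wsp k - S"
    proof
      fix z assume "z \<in> vadd x ` S"
      then obtain s where s: "s \<in> S" "z = vadd x s" by blast
      then have "z \<notin> S"
        using closed[of s z] x_out vadd_vadd_cancel[of s x] vadd_commute[of x s] by auto
      moreover have "z \<in> Wsp k" using s SW xy(1) by (auto simp: Wsp_def vadd_def)
      ultimately show "z \<in> Wsp k - S" by blast
    qed
    moreover have "card (vadd x ` S) = card (Wsp k - S)"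
    proof -
      have "inj_on (vadd x) S" by (rule inj_onI) (metis vadd_vadd_cancel)
      moreover have "card (Wsp k) = 2 * 2 ^ (k - 1)"
        using k by (simp add: Wsp_def card_Pow power_Suc[symmetric])
      ultimately show ?thesis
        using S(2) SW finW by (simp add: card_image card_Diff_subset finite_subset)
    qed
    ultimately have "vadd x ` S = Wsp k - S"
      using finW by (intro card_subset_eq) auto
    then obtain s where "s \<in> S" "y = vadd x s" using xy(2) y_out by blast
    then show ?thesis by (simp add: vadd_vadd_cancel)
  qed
  have "vadd x (vadd x y) = y" "vadd y (vadd x y) = x"
    using vadd_vadd_cancel[of x y] vadd_vadd_cancel[of y x] vadd_commute[of x y] by simp_all
  then show ?thesis
    using closed[of x "vadd x y"] closed[of y "vadd x y"] closed[of x y] outside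
    by (cases "x \<in> S"; cases "y \<in> S") auto
qed

lemma half_subspace_eq_hyperplane:
  assumes S: "is_subspace k S" "card S = 2 ^ (k - 1)" and k: "1 \<le> k"
  obtains a where "a \<subseteq> {0..<k}" "a \<noteq> {}" "S = hyperplane k a"
proof -
  define a where "a = {j \<in> {0..<k}. {j} \<notin> S}"
  have fin_a: "finite a" by (simp add: a_def)
  have mem_iff: "x \<in> S \<longleftrightarrow> even (card (x \<inter> a))" if "x \<subseteq> {0..<k}" for x
  proof -
    have "finite x" using that finite_subset by blast
    then show ?thesis using that
    proof (induction x rule: finite_induct)
      case empty
      then show ?case using S(1) by (simp add: is_subspace_def)
    next
      case (insert j x)
      then have x: "x \<subseteq> {0..<k}" and "insert j x = vadd {j} x" "{j} \<in> Wsp k" "x \<in> Wsp k"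
        by (auto simp: vadd_def Wsp_def)
      moreover have "{j} \<inter> a = (if {j} \<in> S then {} else {j})"
        using insert.prems by (auto simp: a_def)
      then have "{j} \<in> S \<longleftrightarrow> even (card ({j} \<inter> a))" by simp
      ultimately show ?case
        using insert.IH[OF x] vadd_mem_half_subspace_iff[OF S k] even_card_vadd_Int_iff[OF fin_a]
        by simp
    qed
  qed
  have "S = hyperplane k a"
    using S(1) mem_iff by (auto simp: hyperplane_def is_subspace_def Wsp_def)
  moreover have "a \<noteq> {}"
  proof
    assume "a = {}"
    then have "S = Pow {0..<k}" using \<open>S = hyperplane k a\<close> by (auto simp: hyperplane_def)
    then show False using S(2) k by (simp add: card_Pow)
  qed
  moreover have "a \<subseteq> {0..<k}" unfolding a_def by blast
  ultimately show ?thesis using that by blast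
qed

lemma inj_on_hyperplane: "inj_on (hyperplane k) (Pow {0..<k})"
proof (rule inj_onI)
  fix a b assume ab: "a \<in> Pow {0..<k}" "b \<in> Pow {0..<k}" "hyperplane k a = hyperplane k b"
  have mem_iff: "j \<in> a \<longleftrightarrow> {j} \<notin> hyperplane k a" if "j < k" for j a
  proof -
    have "{j} \<inter> a = (if j \<in> a then {j} else {})" by auto
    then show ?thesis using that by (simp add: hyperplane_def)
  qed
  have "j \<in> a \<longleftrightarrow> j \<in> b" for j
  proof (cases "j < k")
    case True
    then show ?thesis using mem_iff[OF True, of a] mem_iff[OF True, of b] ab(3) by simp
  next
    case False
    then show ?thesis using ab(1,2) by auto
  qed
  then show "a = b" by blast
qed

lemma Xi_eq_hyperplanes:
  assumes "1 \<le> k" shows "Xi k (k - 1) = hyperplane k ` (Pow {0..<k} - {{}})"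
proof
  show "Xi k (k - 1) \<subseteq> hyperplane k ` (Pow {0..<k} - {{}})"
  proof
    fix S assume S: "S \<in> Xi k (k - 1)"
    then have "is_subspace k S" by (simp add: Xi_def)
    moreover have "card S = 2 ^ (k - 1)" using S by (rule card_Xi)
    ultimately obtain a where "a \<subseteq> {0..<k}" "a \<noteq> {}" "S = hyperplane k a"
      using assms by (rule half_subspace_eq_hyperplane)
    then show "S \<in> hyperplane k ` (Pow {0..<k} - {{}})" by blast
  qed
next
  show "hyperplane k ` (Pow {0..<k} - {{}}) \<subseteq> Xi k (k - 1)"
    using hyperplane_in_Xi by auto
qed

section \<open>The Walsh transform\<close>

definition walsh :: "nat \<Rightarrow> (nat \<Rightarrow> real) \<Rightarrow> nat set \<Rightarrow> real" where
  "walsh k q a = (\<Sum>i<2^k. q i * (-1) ^ card (nu i \<inter> a))"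

lemma walsh_empty: "walsh k q {} = (\<Sum>i<2^k. q i)"
  by (simp add: walsh_def)

lemma sum_minus_one_power_card_nu_Int:
  "(\<Sum>i<2^k. (-1::real) ^ card (nu i \<inter> b)) = (if b \<inter> {0..<k} = {} then 2 ^ k else 0)"
proof -
  have "(\<Sum>i<2^k. (-1::real) ^ card (nu i \<inter> b)) = (\<Sum>x\<in>Pow {0..<k}. (-1) ^ card (b \<inter> x))"
    using sum.reindex_bij_betw[OF bij_betw_nu, of "\<lambda>x. (-1::real) ^ card (b \<inter> x)" k]
    by (simp add: Int_commute)
  then show ?thesis by (simp add: sum_Pow_minus_one_power_card_Int)
qed

lemma zeta_hyperplane: "zeta k (hyperplane k a) q = ((\<Sum>i<2^k. q i) + walsh k q a) / 2"
proof -
  have "zeta k (hyperplane k a) q = (\<Sum>i\<in>{i \<in> {..<2^k}. even (card (nu i \<inter> a))}. q i)"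
    unfolding zeta_def by (rule sum.cong) (use nu_subset in \<open>auto simp: hyperplane_def\<close>)
  also have "\<dots> = (\<Sum>i<2^k. if even (card (nu i \<inter> a)) then q i else 0)"
    by (rule sum.inter_filter) simp
  also have "\<dots> = (\<Sum>i<2^k. (q i + q i * (-1) ^ card (nu i \<inter> a)) / 2)"
    by (intro sum.cong) auto
  finally show ?thesis
    by (simp add: walsh_def sum.distrib flip: sum_divide_distrib)
qed

lemma sum_walsh: "(\<Sum>a\<in>Pow {0..<k}. walsh k q a) = 2 ^ k * q 0"
proof -
  have "(\<Sum>a\<in>Pow {0..<k}. walsh k q a) = (\<Sum>i<2^k. q i * (\<Sum>a\<in>Pow {0..<k}. (-1) ^ card (nu i \<inter> a)))"
    unfolding walsh_def by (simp add: sum_distrib_left sum.swap[of _ "Pow _"])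
  also have "\<dots> = (\<Sum>i<(2::nat)^k. if i = 0 then 2 ^ k * q 0 else 0)"
  proof (intro sum.cong refl)
    fix i :: nat assume "i \<in> {..<2^k}"
    then have "nu i \<inter> {0..<k} = nu i" using nu_subset by blast
    then show "q i * (\<Sum>a\<in>Pow {0..<k}. (-1) ^ card (nu i \<inter> a)) = (if i = 0 then 2 ^ k * q 0 else 0)"
      by (simp add: sum_Pow_minus_one_power_card_Int nu_eq_empty_iff)
  qed
  finally show ?thesis by simp
qed

lemma sum_walsh_squared:
  "(\<Sum>a\<in>Pow {0..<k}. (walsh k q a)^2) = 2 ^ k * (\<Sum>i<2^k. (q i)^2)"
proof -
  let ?\<chi> = "\<lambda>i j a. (-1::real) ^ card (vadd (nu i) (nu j) \<inter> a)"
  have "(\<Sum>a\<in>Pow {0..<k}. (walsh k q a)^2) = (\<Sum>a\<in>Pow {0..<k}. \<Sum>i<2^k. \<Sum>j<2^k. q i * q j * ?\<chi> i j a)"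
  proof (intro sum.cong refl)
    fix a assume "a \<in> Pow {0..<k}"
    then have "finite a" using finite_subset by blast
    then show "(walsh k q a)^2 = (\<Sum>i<2^k. \<Sum>j<2^k. q i * q j * ?\<chi> i j a)"
      by (simp add: walsh_def power2_eq_square sum_product minus_one_power_card_vadd_Int mult_ac)
  qed
  also have "\<dots> = (\<Sum>i<2^k. \<Sum>j<2^k. q i * q j * (\<Sum>a\<in>Pow {0..<k}. ?\<chi> i j a))"
    by (simp add: sum_distrib_left sum.swap[of _ "Pow _"])
  also have "\<dots> = (\<Sum>i<2^k. \<Sum>j<2^k. if i = j then 2 ^ k * (q i)^2 else 0)"
  proof (intro sum.cong refl)
    fix i j :: nat assume "i \<in> {..<2^k}" "j \<in> {..<2^k}"
    then have "vadd (nu i) (nu j) \<inter> {0..<k} = vadd (nu i) (nu j)"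
      using nu_subset by (auto simp: vadd_def)
    moreover have "vadd (nu i) (nu j) = {} \<longleftrightarrow> i = j"
      using inj_eq[OF inj_nu] by (auto simp: vadd_def)
    ultimately show "q i * q j * (\<Sum>a\<in>Pow {0..<k}. ?\<chi> i j a) = (if i = j then 2 ^ k * (q i)^2 else 0)"
      by (simp add: sum_Pow_minus_one_power_card_Int power2_eq_square)
  qed
  finally show ?thesis by (simp add: sum_distrib_left)
qed

lemma minus_sum_le_walsh:
  assumes "\<And>i. i < 2^k \<Longrightarrow> 0 \<le> q i" shows "- (\<Sum>i<2^k. q i) \<le> walsh k q a"
  unfolding walsh_def sum_negf[symmetric] using assms
  by (intro sum_mono) (auto simp: minus_one_power_iff)

lemma qcheck_eq:
  assumes "i < 2^k" "1 \<le> k"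
  shows "qcheck k i = (1 - (-1) ^ card (nu i \<inter> {k - 1})) / 2 ^ k"
proof -
  have "(2::real) powi (1 - int k) = 2 / 2 ^ k"
    by (simp add: power_int_diff)
  moreover have "nu i \<inter> {k - 1} = (if 2^(k-1) \<le> i then {k - 1} else {})"
    using top_mem_nu_iff[OF assms] by auto
  ultimately show ?thesis
    using assms(1) by (simp add: qcheck_def)
qed

lemma walsh_qcheck:
  assumes k: "1 \<le> k" and a: "a \<subseteq> {0..<k}" "a \<noteq> {}"
  shows "walsh k (qcheck k) a = (if a = {k - 1} then -1 else 0)"
proof -
  let ?S = "\<lambda>b. \<Sum>i<2^k. (-1::real) ^ card (nu i \<inter> b)"
  have "walsh k (qcheck k) a = (\<Sum>i<2^k. ((-1) ^ card (nu i \<inter> a) - (-1) ^ card (nu i \<inter> vadd a {k - 1})) / 2 ^ k)"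
    unfolding walsh_def
  proof (intro sum.cong refl)
    fix i :: nat assume "i \<in> {..<2^k}"
    then have "finite (nu i)" using nu_subset finite_subset by blast
    then have "(-1::real) ^ card (nu i \<inter> vadd a {k - 1})
        = (-1) ^ card (nu i \<inter> a) * (-1) ^ card (nu i \<inter> {k - 1})"
      using minus_one_power_card_vadd_Int[of "nu i" a "{k - 1}"] by (simp only: Int_commute)
    then show "qcheck k i * (-1) ^ card (nu i \<inter> a)
        = ((-1) ^ card (nu i \<inter> a) - (-1) ^ card (nu i \<inter> vadd a {k - 1})) / 2 ^ k"
      using \<open>i \<in> {..<2^k}\<close> k by (simp add: qcheck_eq field_simps)
  qed
  also have "\<dots> = (?S a - ?S (vadd a {k - 1})) / 2 ^ k"
    by (simp add: sum_subtractf flip: sum_divide_distrib)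
  also have "\<dots> = (if a = {k - 1} then -1 else 0)"
  proof -
    have "vadd a {k - 1} \<subseteq> {0..<k}" using a k by (auto simp: vadd_def)
    moreover have "vadd a {k - 1} = {} \<longleftrightarrow> a = {k - 1}" by (auto simp: vadd_def)
    ultimately show ?thesis
      using a by (simp add: sum_minus_one_power_card_nu_Int Int_absorb2)
  qed
  finally show ?thesis .
qed

lemma sum_squared_deviation:
  fixes q :: "nat \<Rightarrow> real" and c :: real
  assumes "q 0 = 0"
  shows "(\<Sum>i\<in>{1..<N}. (q i - c)^2) = (\<Sum>i<N. (q i)^2) - 2 * c * (\<Sum>i<N. q i) + real (N - 1) * c^2"
proof -
  have drop_0: "(\<Sum>i<N. f i) = (\<Sum>i\<in>{1..<N}. f i)" if "f 0 = 0" for f :: "nat \<Rightarrow> real"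
    using that by (cases N) (auto simp: lessThan_atLeast0 sum.atLeast_Suc_lessThan)
  show ?thesis
    using assms
    by (simp add: drop_0[of q] drop_0[of "\<lambda>i. (q i)^2"] power2_diff sum.distrib sum_subtractf
        sum_distrib_left mult_ac)
qed

lemma mem_C_rho_iff:
  assumes "2 \<le> k"
  shows "q \<in> C_rho k \<longleftrightarrow>
    q 0 = 0 \<and> (\<forall>i<2^k. 0 \<le> q i) \<and> (\<Sum>i<2^k. q i) = 1 \<and> (\<Sum>i<2^k. (q i)^2) = 2 / 2^k"
proof -
  define M :: real where "M = 2 ^ (k - 1)"
  have N: "(2::real) ^ k = 2 * M" and "2 \<le> M"
    using assms power_increasing[of 1 "k - 1" "2::real"]
    by (auto simp: M_def power_Suc[symmetric])
  have card: "real (2 ^ k - 1 :: nat) = 2 * M - 1"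
    using N by (simp add: of_nat_diff)
  have deviation: "(\<Sum>i\<in>{1..<2^k}. (q i - 1 / (2^k - 1))^2) = 2 / 2^k - 1 / (2 * M - 1)
      \<longleftrightarrow> (\<Sum>i<2^k. (q i)^2) = 2 / 2^k"
    if "q 0 = 0" "(\<Sum>i<2^k. q i) = 1"
  proof -
    have "(\<Sum>i\<in>{1..<2^k}. (q i - 1 / (2^k - 1))^2)
        = (\<Sum>i<2^k. (q i)^2) - 2 * (1 / (2 * M - 1)) + (2 * M - 1) * (1 / (2 * M - 1))^2"
      using that sum_squared_deviation[of q "1 / (2^k - 1)" "2^k"] by (simp add: N card)
    also have "\<dots> = (\<Sum>i<2^k. (q i)^2) - 1 / (2 * M - 1)"
      using \<open>2 \<le> M\<close> by (simp add: power2_eq_square)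
    finally show ?thesis by simp
  qed
  have "(2^(k-1) - 1) / ((2^k - 2^(k-1)) * (2^k - 1)) = (M - 1) / ((2 * M - M) * (2 * M - 1))"
    by (simp only: N M_def[symmetric])
  also have "\<dots> = 2 / 2^k - 1 / (2 * M - 1)"
    using \<open>2 \<le> M\<close> by (simp add: N field_simps)
  finally have variance: "(2^(k-1) - 1) / ((2^k - 2^(k-1)) * (2^k - 1)) = 2 / 2^k - 1 / (2 * M - (1::real))" .
  show ?thesis
    unfolding C_rho_def mem_Collect_eq variance using deviation by blast
qed

lemma sum_qcheck_power:
  assumes "1 \<le> k" "1 \<le> p"
  shows "(\<Sum>i<2^k. qcheck k i ^ p) = 2 ^ (k - 1) * (2 / 2 ^ k) ^ p"
proof -
  have "(2::nat) ^ k = 2 * 2 ^ (k - 1)"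
    using assms(1) by (cases k) simp_all
  then have card: "card {2^(k-1)..<2^k :: nat} = 2 ^ (k - 1)"
    by simp
  have "(\<Sum>i<2^k. qcheck k i ^ p) = (\<Sum>i\<in>{2^(k-1)..<2^k::nat}. (2 / 2 ^ k) ^ p)"
    using assms by (intro sum.mono_neutral_cong_right) (auto simp: qcheck_def power_int_diff)
  also have "\<dots> = 2 ^ (k - 1) * (2 / 2 ^ k) ^ p"
    by (simp only: sum_constant card) simp
  finally show ?thesis .
qed

lemma qcheck_in_C_rho:
  assumes "2 \<le> k" shows "qcheck k \<in> C_rho k"
proof -
  have k: "1 \<le> k" using assms by simp
  have N: "(2::real) ^ k = 2 * 2 ^ (k - 1)"
    using assms by (simp add: power_Suc[symmetric])
  have "(\<Sum>i<2^k. qcheck k i) = 1"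
    using sum_qcheck_power[OF k order_refl] N by simp
  moreover have "(\<Sum>i<2^k. (qcheck k i)^2) = 2 / 2 ^ k"
    using sum_qcheck_power[OF k, of 2] N by (simp add: power2_eq_square)
  ultimately show ?thesis
    using assms by (simp add: mem_C_rho_iff qcheck_def)
qed

lemma walsh_moments:
  assumes "2 \<le> k" "q \<in> C_rho k"
  shows "(\<Sum>a\<in>Pow {0..<k} - {{}}. 1 + walsh k q a) = 2 ^ k - 2"
    and "(\<Sum>a\<in>Pow {0..<k} - {{}}. (1 + walsh k q a)^2) = 2 ^ k - 2"
proof -
  let ?A = "Pow {0..<k} - {{}}"
  from assms have q: "q 0 = 0" "(\<Sum>i<2^k. q i) = 1" "(\<Sum>i<2^k. (q i)^2) = 2 / 2 ^ k"
    by (simp_all add: mem_C_rho_iff)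
  have card: "real (card ?A) = 2 ^ k - 1"
    by (simp add: card_Pow of_nat_diff)
  have remove_empty: "(\<Sum>a\<in>Pow {0..<k}. f a) = f {} + (\<Sum>a\<in>?A. f a)" for f :: "nat set \<Rightarrow> real"
    by (rule sum.remove) auto
  have walsh_sum: "(\<Sum>a\<in>?A. walsh k q a) = -1"
    using remove_empty[of "walsh k q"] q by (simp add: sum_walsh walsh_empty)
  have walsh_sq_sum: "(\<Sum>a\<in>?A. (walsh k q a)^2) = 1"
    using remove_empty[of "\<lambda>a. (walsh k q a)^2"] q by (simp add: sum_walsh_squared walsh_empty)
  show "(\<Sum>a\<in>?A. 1 + walsh k q a) = 2 ^ k - 2"
    using walsh_sum card by (simp add: sum.distrib)
  have "(\<Sum>a\<in>?A. (1 + walsh k q a)^2) = (\<Sum>a\<in>?A. 1 + 2 * walsh k q a + (walsh k q a)^2)"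
    by (simp add: power2_eq_square algebra_simps)
  then show "(\<Sum>a\<in>?A. (1 + walsh k q a)^2) = 2 ^ k - 2"
    using walsh_sum walsh_sq_sum card by (simp add: sum.distrib flip: sum_distrib_left)
qed

section \<open>An exponential inequality\<close>

lemma exp_times_quadratic_ge_two:
  fixes u :: real assumes "0 \<le> u" shows "2 \<le> exp u * (u^2 - 2*u + 2)"
proof -
  have "exp 0 * (0^2 - 2*0 + 2) \<le> exp u * (u^2 - 2*u + (2::real))"
  proof (rule DERIV_nonneg_imp_nondecreasing[OF assms])
    fix x :: real
    have "((\<lambda>u. exp u * (u^2 - 2*u + 2)) has_real_derivative exp x * (x^2 - 2*x + 2) + exp x * (2*x - 2)) (at x)"
      by (auto intro!: derivative_eq_intros)
    moreover have "exp x * (x^2 - 2*x + 2) + exp x * (2*x - 2) = exp x * x^2"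
      by (simp add: algebra_simps power2_eq_square)
    ultimately show "\<exists>y. ((\<lambda>u. exp u * (u^2 - 2*u + 2)) has_real_derivative y) (at x) \<and> 0 \<le> y"
      by auto
  qed
  then show ?thesis by simp
qed

lemma mono_expm1_div_deriv:
  fixes u v :: real assumes "0 < u" "u \<le> v"
  shows "(u * exp u - exp u + 1) / u^2 \<le> (v * exp v - exp v + 1) / v^2"
proof (rule DERIV_nonneg_imp_nondecreasing[OF assms(2)])
  fix x :: real assume "u \<le> x"
  with assms have x: "0 < x" by simp
  have "((\<lambda>u. (u * exp u - exp u + 1) / u^2) has_real_derivative
      ((1 * exp x + x * exp x - exp x) * x^2 - (x * exp x - exp x + 1) * (2 * x)) / (x^2 * x^2)) (at x)"
    using x by (auto intro!: derivative_eq_intros)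
  moreover have "((1 * exp x + x * exp x - exp x) * x^2 - (x * exp x - exp x + 1) * (2 * x)) / (x^2 * x^2)
      = (exp x * (x^2 - 2*x + 2) - 2) / x^3"
    using x by (simp add: field_simps power2_eq_square power3_eq_cube)
  moreover have "0 \<le> (exp x * (x^2 - 2*x + 2) - 2) / x^3"
    using exp_times_quadratic_ge_two[of x] x by simp
  ultimately show "\<exists>y. ((\<lambda>u. (u * exp u - exp u + 1) / u^2) has_real_derivative y) (at x) \<and> 0 \<le> y"
    by auto
qed

lemma convex_on_expm1_div:
  fixes s :: real assumes "0 < s"
  shows "convex_on {0<..} (\<lambda>x. (exp (s*x) - 1) / x)"
proof (rule convex_on_realI[where f'="\<lambda>x. s^2 * (((s*x) * exp (s*x) - exp (s*x) + 1) / (s*x)^2)"])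
  show "connected {0::real<..}" by simp
  show "((\<lambda>x. (exp (s*x) - 1) / x) has_real_derivative s^2 * (((s*y) * exp (s*y) - exp (s*y) + 1) / (s*y)^2)) (at y)"
    if "y \<in> {0<..}" for y
  proof -
    from that have y: "0 < y" by simp
    have "((\<lambda>x. (exp (s*x) - 1) / x) has_real_derivative (exp (s*y) * (0 * y + s * 1) * y - (exp (s*y) - 1) * 1) / (y * y)) (at y)"
      using y by (auto intro!: derivative_eq_intros)
    moreover have "(exp (s*y) * (0 * y + s * 1) * y - (exp (s*y) - 1) * 1) / (y * y)
        = s^2 * (((s*y) * exp (s*y) - exp (s*y) + 1) / (s*y)^2)"
      using y assms by (simp add: field_simps power2_eq_square)
    ultimately show ?thesis by simp
  qed
  show "s^2 * (((s*y) * exp (s*y) - exp (s*y) + 1) / (s*y)^2) \<le> s^2 * (((s*z) * exp (s*z) - exp (s*z) + 1) / (s*z)^2)"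
    if "y \<in> {0<..}" "z \<in> {0<..}" "y \<le> z" for y z
    using that assms by (intro mult_left_mono mono_expm1_div_deriv) auto
qed

text \<open>The tangent at x = 1 of the convex function (e^(sx) - 1)/x, multiplied by x; the bound is an
  equality at x = 0 and x = 1.\<close>

lemma exp_ge_quadratic:
  fixes s x :: real assumes s: "0 < s" and x: "0 \<le> x"
  shows "1 + (2*exp s - 2 - s*exp s) * x + (s*exp s - exp s + 1) * x^2 \<le> exp (s*x)"
proof (cases "x = 0")
  case False
  with x have "0 < x" by simp
  let ?\<phi> = "\<lambda>x. (exp (s*x) - 1) / x"
  have "(?\<phi> has_real_derivative s * exp s - exp s + 1) (at 1 within {0<..})"
    by (auto intro!: derivative_eq_intros)
  then have "(s * exp s - exp s + 1) * (x - 1) \<le> ?\<phi> x - ?\<phi> 1"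
    using \<open>0 < x\<close> by (intro convex_on_imp_above_tangent[OF convex_on_expm1_div[OF s]])
      (auto simp: interior_open)
  with \<open>0 < x\<close> show ?thesis
    by (simp add: field_simps power2_eq_square)
qed simp

lemma sum_exp_ge_of_moments:
  fixes s m :: real and x :: "'a \<Rightarrow> real"
  assumes "finite A" "0 < s" "\<And>a. a \<in> A \<Longrightarrow> 0 \<le> x a"
    and "(\<Sum>a\<in>A. x a) = m" "(\<Sum>a\<in>A. (x a)^2) = m"
  shows "real (card A) - m + m * exp s \<le> (\<Sum>a\<in>A. exp (s * x a))"
proof -
  define \<beta> where "\<beta> = 2*exp s - 2 - s*exp s"
  define \<gamma> where "\<gamma> = s*exp s - exp s + 1"
  have "real (card A) - m + m * exp s = real (card A) + \<beta> * m + \<gamma> * m"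
    by (simp add: \<beta>_def \<gamma>_def algebra_simps)
  also have "\<dots> = (\<Sum>a\<in>A. 1 + \<beta> * x a + \<gamma> * (x a)^2)"
    using assms(4,5) by (simp add: sum.distrib flip: sum_distrib_left)
  also have "\<dots> \<le> (\<Sum>a\<in>A. exp (s * x a))"
    using exp_ge_quadratic[OF assms(2) assms(3)] by (intro sum_mono) (simp add: \<beta>_def \<gamma>_def)
  finally show ?thesis .
qed

lemma sum_exp_of_0_1:
  fixes s m :: real and x :: "'a \<Rightarrow> real"
  assumes "\<And>a. a \<in> A \<Longrightarrow> x a \<in> {0, 1}" "(\<Sum>a\<in>A. x a) = m"
  shows "(\<Sum>a\<in>A. exp (s * x a)) = real (card A) - m + m * exp s"
proof -
  have "(\<Sum>a\<in>A. exp (s * x a)) = (\<Sum>a\<in>A. 1 + (exp s - 1) * x a)"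
    using assms(1) by (intro sum.cong) fastforce+
  then show ?thesis
    using assms(2) by (simp add: sum.distrib flip: sum_distrib_left) (simp add: algebra_simps)
qed

lemma lambda_chi_eq_walsh:
  assumes "1 \<le> k" "0 < \<epsilon>" "\<epsilon> < 2" "(\<Sum>i<2^k. q i) = 1"
  defines "r \<equiv> \<epsilon> / (2 - \<epsilon>)"
  shows "lambda_chi k n \<epsilon> q = (2 - \<epsilon>) ^ n * 2 powi (- int k) *
    (1 + r ^ n * (\<Sum>a\<in>Pow {0..<k} - {{}}. exp (- real n * ln r / 2 * (1 + walsh k q a)))) - 1"
proof -
  have "0 < r" using assms by (simp add: r_def)
  have summand: "r powr (real n * (1 - zeta k (hyperplane k a) q))
      = r ^ n * exp (- real n * ln r / 2 * (1 + walsh k q a))" for a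
  proof -
    have "real n * (1 - zeta k (hyperplane k a) q) * ln r
        = real n * ln r + - real n * ln r / 2 * (1 + walsh k q a)"
      using assms(4) by (simp add: zeta_hyperplane field_simps)
    moreover have "exp (real n * ln r) = r ^ n"
      using \<open>0 < r\<close> by (simp add: exp_of_nat_mult)
    ultimately show ?thesis
      using \<open>0 < r\<close> by (simp only: powr_def exp_add) simp
  qed
  have "inj_on (hyperplane k) (Pow {0..<k} - {{}})"
    by (rule inj_on_subset[OF inj_on_hyperplane]) blast
  then have reindex: "(\<Sum>S\<in>Xi k (k - 1). f S) = (\<Sum>a\<in>Pow {0..<k} - {{}}. f (hyperplane k a))"
    for f :: "nat set set \<Rightarrow> real"
    unfolding Xi_eq_hyperplanes[OF assms(1)] by (simp add: sum.reindex)
  show ?thesis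
    unfolding lambda_chi_def r_def[symmetric] reindex summand by (simp add: sum_distrib_left)
qed

theorem theorem8:
  fixes \<kappa> n :: nat and \<epsilon> :: real
  assumes "\<kappa> \<ge> 2" and "n \<ge> 1" and "0 < \<epsilon>" and "\<epsilon> < 1"
  shows "qcheck \<kappa> \<in> C_rho \<kappa> \<and>
         (\<forall>q\<in>C_rho \<kappa>. lambda_chi \<kappa> n \<epsilon> (qcheck \<kappa>) \<le> lambda_chi \<kappa> n \<epsilon> q)"
proof (intro conjI ballI)
  let ?A = "Pow {0..<\<kappa>} - {{}}" and ?r = "\<epsilon> / (2 - \<epsilon>)"
  let ?s = "- real n * ln ?r / 2"
  have k: "1 \<le> \<kappa>" using assms(1) by simp
  have "0 < ?r" "?r < 1" using assms(3,4) by (simp_all add: field_simps)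
  then have s: "0 < ?s" using assms(2) by (simp add: mult_pos_neg)
  show qcheck: "qcheck \<kappa> \<in> C_rho \<kappa>"
    using assms(1) by (rule qcheck_in_C_rho)
  fix q assume q: "q \<in> C_rho \<kappa>"
  then have nonneg: "0 \<le> 1 + walsh \<kappa> q a" for a
    using minus_sum_le_walsh[of \<kappa> q a] by (simp add: mem_C_rho_iff[OF assms(1)])
  have "(\<Sum>a\<in>?A. exp (?s * (1 + walsh \<kappa> (qcheck \<kappa>) a)))
      = real (card ?A) - (2 ^ \<kappa> - 2) + (2 ^ \<kappa> - 2) * exp ?s"
    using walsh_qcheck[OF k] walsh_moments(1)[OF assms(1) qcheck] by (intro sum_exp_of_0_1) auto
  also have "\<dots> \<le> (\<Sum>a\<in>?A. exp (?s * (1 + walsh \<kappa> q a)))"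
    using walsh_moments[OF assms(1) q] s nonneg by (intro sum_exp_ge_of_moments) auto
  finally show "lambda_chi \<kappa> n \<epsilon> (qcheck \<kappa>) \<le> lambda_chi \<kappa> n \<epsilon> q"
    using assms(3,4) q qcheck
    by (simp add: lambda_chi_eq_walsh[OF k] mem_C_rho_iff[OF assms(1)] mult_left_mono)
qed

end
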